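(* In the free-group setting described in the context, the extension $\pi_Y\circ\pi_f:X_f\to Y$ is point-distal.
   Context: Let $r\ge2$ and $\Gamma=F_r$ free on $S=\{a,b,a_3,\dots,a_r\}$. $Y$ is the Gromov boundary (infinite reduced words in $S\cup S^{-1}$, $\Gamma$ acting by concatenation and cancellation). For nontrivial $s\in\Gamma$, $y\in Y$ starts with $s$ if $y=sy'$ with the last letter of $s$ not inverse to the first letter of $y'$; $V_s$ is the set of such $y$; $a^\infty$ is the constant word $a$. Let $\{\Gamma_n\}$ be strictly decreasing finite-index normal subgroups with trivial intersection, $Z=\varprojlim\Gamma/\Gamma_n$ with left translation, $\pi_n:Z\to\Gamma/\Gamma_n$, $X=Y\times Z$ with product action, $\pi_Y:X\to Y$ the projection. For $n\ge2$ choose $\gamma_n\in\Gamma_{n-1}\setminus\Gamma_n$; $u_n=a^nba^{-n}b^{-1}$, $D_n=V_{u_n}$, $C_n=\pi_n^{-1}(\gamma_n\Gamma_n)$, $X_+=\bigcup_{n\ge2}D_n\times C_n$, $X_-=X\setminus(X_+\cup\{(a^\infty,e_\Gamma)\})$, $f=\pm1$ on $X_\pm$. $\pi_f:X_f\to X$ is the McMahon extension: the (unique up to conjugacy) minimal continuous action on a compact metrizable space with equivariant continuous surjection whose fibers are single points off $\Gamma(a^\infty,e_\Gamma)$ and two points on it, such that $f\circ\pi_f$ extends continuously to $X_f$. An extension $\pi:\tilde X\to Y$ is point-distal if there is $x\in\tilde X$ with dense orbit such that for every $x'\ne x$ with $\pi(x')=\pi(x)$ the orbit closure of $(x,x')$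 in $\tilde X^2$ misses the diagonal. *)

theory Defs
  imports "HOL-Analysis.Analysis" "HOL-Algebra.Algebra"
begin

text \<open>A letter is (i, inverted?) with i < r; generator index 0 is a, index 1 is b,
  indices 2..r-1 are a_3,...,a_r.\<close>
type_synonym gen = "nat \<times> bool"

definition letters :: "nat \<Rightarrow> gen set" where
  "letters r = {x. fst x < r}"

definition inv_gen :: "gen \<Rightarrow> gen" where
  "inv_gen x = (fst x, \<not> snd x)"

fun reduced :: "gen list \<Rightarrow> bool" where
  "reduced (x # y # xs) = (y \<noteq> inv_gen x \<and> reduced (y # xs))"
| "reduced _ = True"

definition red_cons :: "gen \<Rightarrow> gen list \<Rightarrow> gen list" where
  "red_cons x w = (case w of [] \<Rightarrow> [x] | y # ys \<Rightarrow> (if y = inv_gen x then ys else x # w))"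

definition FG :: "nat \<Rightarrow> gen list monoid" where
  "FG r = \<lparr>carrier = {w. set w \<subseteq> letters r \<and> reduced w},
           mult = (\<lambda>u v. foldr red_cons u v), one = []\<rparr>"

definition gen_a :: gen where "gen_a = (0, False)"
definition gen_b :: gen where "gen_b = (1, False)"

definition u_word :: "nat \<Rightarrow> gen list" where
  "u_word n = replicate n gen_a @ [gen_b] @ replicate n (inv_gen gen_a) @ [inv_gen gen_b]"

definition Ybd :: "nat \<Rightarrow> (nat \<Rightarrow> gen) set" where
  "Ybd r = {y. \<forall>n. y n \<in> letters r \<and> y (Suc n) \<noteq> inv_gen (y n)}"

definition Ytop :: "nat \<Rightarrow> (nat \<Rightarrow> gen) topology" where
  "Ytop r = subtopology (product_topology (\<lambda>_. discrete_topology UNIV) UNIV) (Ybd r)"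

definition bact_gen :: "gen \<Rightarrow> (nat \<Rightarrow> gen) \<Rightarrow> (nat \<Rightarrow> gen)" where
  "bact_gen x y = (if y 0 = inv_gen x then (\<lambda>n. y (Suc n))
                   else (\<lambda>n. if n = 0 then x else y (n - 1)))"

definition bact :: "gen list \<Rightarrow> (nat \<Rightarrow> gen) \<Rightarrow> (nat \<Rightarrow> gen)" where
  "bact w y = foldr bact_gen w y"

definition Vset :: "nat \<Rightarrow> gen list \<Rightarrow> (nat \<Rightarrow> gen) set" where
  "Vset r s = {y. \<exists>y' \<in> Ybd r. y' 0 \<noteq> inv_gen (last s) \<and>
                 y = (\<lambda>n. if n < length s then s ! n else y' (n - length s))}"

definition a_inf :: "nat \<Rightarrow> gen" where "a_inf = (\<lambda>_. gen_a)"

definition Zset :: "nat \<Rightarrow> (nat \<Rightarrow> gen list set) \<Rightarrow> (nat \<Rightarrow> gen list set) set" where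
  "Zset r Gs = {z. \<forall>n. z n \<in> {g <#\<^bsub>FG r\<^esub> Gs n | g. g \<in> carrier (FG r)}
                     \<and> z (Suc n) \<subseteq> z n}"

definition Ztop :: "nat \<Rightarrow> (nat \<Rightarrow> gen list set) \<Rightarrow> (nat \<Rightarrow> gen list set) topology" where
  "Ztop r Gs = subtopology (product_topology (\<lambda>_. discrete_topology UNIV) UNIV) (Zset r Gs)"

definition zact :: "nat \<Rightarrow> gen list \<Rightarrow> (nat \<Rightarrow> gen list set) \<Rightarrow> (nat \<Rightarrow> gen list set)" where
  "zact r g z = (\<lambda>n. g <#\<^bsub>FG r\<^esub> z n)"

definition zid :: "nat \<Rightarrow> (nat \<Rightarrow> gen list set) \<Rightarrow> (nat \<Rightarrow> gen list set)" where
  "zid r Gs = (\<lambda>n. \<one>\<^bsub>FG r\<^esub> <#\<^bsub>FG r\<^esub> Gs n)"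

definition Xtop where "Xtop r Gs = prod_topology (Ytop r) (Ztop r Gs)"

definition xact where "xact r g p = (bact g (fst p), zact r g (snd p))"

definition x0 where "x0 r Gs = (a_inf, zid r Gs)"

definition Cset where
  "Cset r Gs \<gamma> n = {z \<in> Zset r Gs. z n = \<gamma> n <#\<^bsub>FG r\<^esub> Gs n}"

definition Xplus where
  "Xplus r Gs \<gamma> = (\<Union>n\<in>{2..}. Vset r (u_word n) \<times> Cset r Gs \<gamma> n)"

definition Xminus where
  "Xminus r Gs \<gamma> = topspace (Xtop r Gs) - (Xplus r Gs \<gamma> \<union> {x0 r Gs})"

text \<open>f = 1 on X_+, -1 on X_- (only meaningful off the point x0)\<close>
definition ffun :: "nat \<Rightarrow> (nat \<Rightarrow> gen list set) \<Rightarrow> (nat \<Rightarrow> gen list) \<Rightarrow>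
     (nat \<Rightarrow> gen) \<times> (nat \<Rightarrow> gen list set) \<Rightarrow> real" where
  "ffun r Gs \<gamma> p = (if p \<in> Xplus r Gs \<gamma> then 1 else if p \<in> Xminus r Gs \<gamma> then -1 else 0)"

definition x0_orbit where
  "x0_orbit r Gs = {xact r g (x0 r Gs) | g. g \<in> carrier (FG r)}"

definition minimal_action :: "('g, 'm) monoid_scheme \<Rightarrow> 'x topology \<Rightarrow> ('g \<Rightarrow> 'x \<Rightarrow> 'x) \<Rightarrow> bool" where
  "minimal_action G T act \<longleftrightarrow>
     (\<forall>A. closedin T A \<and> A \<noteq> {} \<and> (\<forall>g\<in>carrier G. \<forall>x\<in>A. act g x \<in> A) \<longrightarrow> A = topspace T)"

definition continuous_action :: "('g, 'm) monoid_scheme \<Rightarrow> 'x topology \<Rightarrow> ('g \<Rightarrow> 'x \<Rightarrow> 'x) \<Rightarrow> bool" where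
  "continuous_action G T act \<longleftrightarrow>
     (\<forall>g\<in>carrier G. continuous_map T T (act g)) \<and>
     (\<forall>x\<in>topspace T. act \<one>\<^bsub>G\<^esub> x = x) \<and>
     (\<forall>g\<in>carrier G. \<forall>h\<in>carrier G. \<forall>x\<in>topspace T. act (g \<otimes>\<^bsub>G\<^esub> h) x = act g (act h x))"

definition orbit_of :: "('g, 'm) monoid_scheme \<Rightarrow> ('g \<Rightarrow> 'x \<Rightarrow> 'x) \<Rightarrow> 'x \<Rightarrow> 'x set" where
  "orbit_of G act x = {act g x | g. g \<in> carrier G}"

definition point_distal :: "('g, 'm) monoid_scheme \<Rightarrow> 'x topology \<Rightarrow> ('g \<Rightarrow> 'x \<Rightarrow> 'x) \<Rightarrow> ('x \<Rightarrow> 'y) \<Rightarrow> bool" where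
  "point_distal G T act \<pi> \<longleftrightarrow>
     (\<exists>x\<in>topspace T. T closure_of (orbit_of G act x) = topspace T \<and>
        (\<forall>x'\<in>topspace T. x' \<noteq> x \<and> \<pi> x' = \<pi> x \<longrightarrow>
           (prod_topology T T) closure_of (orbit_of G (\<lambda>g (p, q). (act g p, act g q)) (x, x'))
             \<inter> {(y, y) | y. y \<in> topspace T} = {}))"

end

theory Submission
  imports Defs
begin

text \<open>The Z-coordinate is an isometric factor: left translation acts injectively on the cosets
  of each level, so two points whose Z-coordinates differ at some level keep differing there along
  the whole orbit, and since each level is a continuous map to a discrete space, the orbit closure
  of the pair stays off the diagonal. Take x over p = (b^\<infinity>, e). Because the stabiliser of
  e in Z is \<Inter>n. \<Gamma>_n = {e} and a^\<infinity> \<noteq> b^\<infinity>, p is not in the orbit of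
  (a^\<infinity>, e), so x is the only point over p; every other point over b^\<infinity> has a different
  Z-coordinate and is thus distal from x, and minimality makes the orbit of x dense. Neither f, nor the
  finiteness of the indices, nor compactness and metrizability of X_f enter the argument.\<close>

lemma orbit_closure_eq_topspace_if_minimal:
  assumes G: "monoid G" and act: "continuous_action G T act" and min: "minimal_action G T act"
    and x: "x \<in> topspace T"
  shows "T closure_of orbit_of G act x = topspace T"
proof -
  let ?O = "orbit_of G act x"
  have act_map: "continuous_map T T (act g)" if "g \<in> carrier G" for g
    using act that by (simp add: continuous_action_def)
  have act_mult: "act g (act h x) = act (g \<otimes>\<^bsub>G\<^esub> h) x" if "g \<in> carrier G" "h \<in> carrier G" for g h
    using act that x by (simp add: continuous_action_def)
  have invariant: "act g ` ?O \<subseteq> ?O" if g: "g \<in> carrier G" for g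
  proof
    fix y assume "y \<in> act g ` ?O"
    then obtain h where "h \<in> carrier G" "y = act g (act h x)"
      by (auto simp: orbit_of_def)
    then show "y \<in> ?O"
      using act_mult g monoid.m_closed[OF G] unfolding orbit_of_def by blast
  qed
  have "x \<in> ?O"
    using act x monoid.one_closed[OF G] unfolding orbit_of_def continuous_action_def by force
  show ?thesis
  proof (rule min[unfolded minimal_action_def, rule_format], intro conjI ballI)
    show "T closure_of ?O \<noteq> {}"
      using \<open>x \<in> ?O\<close> x closure_of_subset_Int by fastforce
    fix g y assume "g \<in> carrier G" "y \<in> T closure_of ?O"
    then show "act g y \<in> T closure_of ?O"
      using continuous_map_image_closure_subset[OF act_map] closure_of_mono[OF invariant] by blast
  qed simp
qed

lemma orbit_closure_disjoint_diagonal_if_separated: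
  assumes \<phi>: "continuous_map T (discrete_topology U) \<phi>"
    and sep: "\<And>g. g \<in> carrier G \<Longrightarrow>
      act g x \<in> topspace T \<and> act g x' \<in> topspace T \<and> \<phi> (act g x) \<noteq> \<phi> (act g x')"
  shows "prod_topology T T closure_of orbit_of G (\<lambda>g (p, q). (act g p, act g q)) (x, x')
           \<inter> {(y, y) | y. y \<in> topspace T} = {}"
proof -
  define C where
    "C = {w \<in> topspace (prod_topology T T). (\<phi> (fst w), \<phi> (snd w)) \<in> {(a, b) \<in> U \<times> U. a \<noteq> b}}"
  have "continuous_map (prod_topology T T) (discrete_topology (U \<times> U)) (\<lambda>w. (\<phi> (fst w), \<phi> (snd w)))"
    unfolding prod_topology_discrete_topology continuous_map_paired
    using continuous_map_compose[OF continuous_map_fst \<phi>] continuous_map_compose[OF continuous_map_snd \<phi>]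
    by (simp add: o_def) blast
  then have "closedin (prod_topology T T) C"
    unfolding C_def by (rule closedin_continuous_map_preimage) auto
  moreover have "orbit_of G (\<lambda>g (p, q). (act g p, act g q)) (x, x') \<subseteq> C"
    using sep continuous_map_funspace[OF \<phi>] by (fastforce simp: orbit_of_def C_def)
  ultimately have "prod_topology T T closure_of orbit_of G (\<lambda>g (p, q). (act g p, act g q)) (x, x') \<subseteq> C"
    by (rule closure_of_minimal[rotated])
  then show ?thesis
    by (auto simp: C_def)
qed

lemma FG_one: "\<one>\<^bsub>FG r\<^esub> = []"
  by (simp add: FG_def)

lemma topspace_Xtop: "topspace (Xtop r Gs) = Ybd r \<times> Zset r Gs"
  by (simp add: Xtop_def Ytop_def Ztop_def)

lemma const_b_in_Ybd: "r \<ge> 2 \<Longrightarrow> (\<lambda>_. gen_b) \<in> Ybd r"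
  by (simp add: Ybd_def letters_def gen_b_def inv_gen_def)

lemma continuous_map_Xtop_Z_level: "continuous_map (Xtop r Gs) (discrete_topology UNIV) (\<lambda>p. snd p n)"
proof -
  have "continuous_map (Ztop r Gs) (discrete_topology UNIV) (\<lambda>z. z n)"
    unfolding Ztop_def
    by (rule continuous_map_from_subtopology)
       (rule continuous_map_product_projection[where X="\<lambda>_. discrete_topology UNIV", simplified], simp)
  from continuous_map_compose[OF continuous_map_snd this] show ?thesis
    by (simp add: Xtop_def o_def)
qed

locale FG_subgroup_seq = group "FG r" for r :: nat +
  fixes Gs :: "nat \<Rightarrow> gen list set"
  assumes subgroup_Gs: "\<And>n. subgroup (Gs n) (FG r)"
begin

lemma zid_level: "zid r Gs n = Gs n"
  using lcos_mult_one[OF subgroup.subset[OF subgroup_Gs]] by (simp add: zid_def)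

lemma zid_in_Zset:
  assumes "\<And>n. Gs (Suc n) \<subseteq> Gs n"
  shows "zid r Gs \<in> Zset r Gs"
  unfolding Zset_def
proof (rule CollectI, intro allI conjI)
  fix n
  show "zid r Gs n \<in> {g <#\<^bsub>FG r\<^esub> Gs n | g. g \<in> carrier (FG r)}"
    using one_closed unfolding zid_def by blast
  show "zid r Gs (Suc n) \<subseteq> zid r Gs n"
    using assms by (simp add: zid_level)
qed

lemma Zset_level_subset_carrier:
  assumes "z \<in> Zset r Gs"
  shows "z n \<subseteq> carrier (FG r)"
proof -
  obtain g where "g \<in> carrier (FG r)" "z n = g <#\<^bsub>FG r\<^esub> Gs n"
    using assms unfolding Zset_def by blast
  then show ?thesis
    using l_coset_subset_G[OF subgroup.subset[OF subgroup_Gs]] by simp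
qed

lemma zact_level_inj:
  assumes "z \<in> Zset r Gs" "z' \<in> Zset r Gs" "g \<in> carrier (FG r)" "zact r g z n = zact r g z' n"
  shows "z n = z' n"
proof -
  have "w n = inv\<^bsub>FG r\<^esub> g <#\<^bsub>FG r\<^esub> zact r g w n" if "w \<in> Zset r Gs" for w
    using that assms(3) Zset_level_subset_carrier[OF that]
    by (simp add: zact_def lcos_m_assoc l_inv lcos_mult_one)
  with assms show ?thesis
    by metis
qed

lemma zact_fixes_zid_imp_mem_Inter:
  assumes g: "g \<in> carrier (FG r)" and fixes_zid: "zact r g (zid r Gs) = zid r Gs"
  shows "g \<in> (\<Inter>n. Gs n)"
proof
  fix n
  have "g \<otimes>\<^bsub>FG r\<^esub> \<one>\<^bsub>FG r\<^esub> \<in> g <#\<^bsub>FG r\<^esub> Gs n"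
    using subgroup.one_closed[OF subgroup_Gs] by (auto simp: l_coset_def)
  also have "g <#\<^bsub>FG r\<^esub> Gs n = Gs n"
    using fun_cong[OF fixes_zid, of n] by (simp add: zact_def zid_level)
  finally show "g \<in> Gs n"
    using r_one[OF g] by simp
qed

lemma const_b_zid_notin_x0_orbit:
  assumes "(\<Inter>n. Gs n) = {\<one>\<^bsub>FG r\<^esub>}"
  shows "((\<lambda>_. gen_b), zid r Gs) \<notin> x0_orbit r Gs"
proof
  assume "((\<lambda>_. gen_b), zid r Gs) \<in> x0_orbit r Gs"
  then obtain g where g: "g \<in> carrier (FG r)"
    and b: "bact g a_inf = (\<lambda>_. gen_b)" and z: "zact r g (zid r Gs) = zid r Gs"
    by (auto simp: x0_orbit_def xact_def x0_def)
  have "g = []"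
    using zact_fixes_zid_imp_mem_Inter[OF g z] assms by (simp add: FG_one)
  with b show False
    by (auto simp: bact_def a_inf_def gen_a_def gen_b_def dest: fun_cong[of _ _ 0])
qed

lemma orbit_closure_disjoint_diagonal_if_Z_differs:
  assumes act: "continuous_action (FG r) T act"
    and \<pi>f_cont: "continuous_map T (Xtop r Gs) \<pi>f"
    and \<pi>f_equiv: "\<And>g x. g \<in> carrier (FG r) \<Longrightarrow> x \<in> topspace T \<Longrightarrow> \<pi>f (act g x) = xact r g (\<pi>f x)"
    and x: "x \<in> topspace T" and x': "x' \<in> topspace T" and differ: "snd (\<pi>f x) \<noteq> snd (\<pi>f x')"
  shows "prod_topology T T closure_of orbit_of (FG r) (\<lambda>g (p, q). (act g p, act g q)) (x, x')
           \<inter> {(y, y) | y. y \<in> topspace T} = {}"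
proof -
  obtain n where n: "snd (\<pi>f x) n \<noteq> snd (\<pi>f x') n"
    using differ by (meson ext)
  have in_Zset: "snd (\<pi>f y) \<in> Zset r Gs" if "y \<in> topspace T" for y
    using continuous_map_funspace[OF \<pi>f_cont] that by (force simp: topspace_Xtop)
  show ?thesis
  proof (rule orbit_closure_disjoint_diagonal_if_separated)
    show "continuous_map T (discrete_topology UNIV) (\<lambda>y. snd (\<pi>f y) n)"
      using continuous_map_compose[OF \<pi>f_cont continuous_map_Xtop_Z_level] by (simp add: o_def)
    fix g assume g: "g \<in> carrier (FG r)"
    have "continuous_map T T (act g)"
      using act g by (simp add: continuous_action_def)
    then have "act g x \<in> topspace T" "act g x' \<in> topspace T"
      using continuous_map_funspace x x' by blast+
    moreover have "snd (\<pi>f (act g x)) n \<noteq> snd (\<pi>f (act g x')) n"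
    proof
      assume "snd (\<pi>f (act g x)) n = snd (\<pi>f (act g x')) n"
      then have "zact r g (snd (\<pi>f x)) n = zact r g (snd (\<pi>f x')) n"
        using \<pi>f_equiv[OF g x] \<pi>f_equiv[OF g x'] by (simp add: xact_def)
      then show False
        using zact_level_inj[OF in_Zset[OF x] in_Zset[OF x'] g] n by blast
    qed
    ultimately show "act g x \<in> topspace T \<and> act g x' \<in> topspace T \<and>
        snd (\<pi>f (act g x)) n \<noteq> snd (\<pi>f (act g x')) n"
      by blast
  qed
qed

lemma point_distal_if_alone_in_fibre:
  assumes act: "continuous_action (FG r) T act" and min: "minimal_action (FG r) T act"
    and \<pi>f_cont: "continuous_map T (Xtop r Gs) \<pi>f"
    and \<pi>f_equiv: "\<And>g x. g \<in> carrier (FG r) \<Longrightarrow> x \<in> topspace T \<Longrightarrow> \<pi>f (act g x) = xact r g (\<pi>f x)"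
    and alone: "{x' \<in> topspace T. \<pi>f x' = \<pi>f x} = {x}"
  shows "point_distal (FG r) T act (\<lambda>x. fst (\<pi>f x))"
  unfolding point_distal_def
proof (intro bexI conjI ballI impI)
  show x: "x \<in> topspace T"
    using alone by blast
  show "T closure_of orbit_of (FG r) act x = topspace T"
    by (rule orbit_closure_eq_topspace_if_minimal[OF is_monoid act min x])
  fix x' assume x': "x' \<in> topspace T" "x' \<noteq> x \<and> fst (\<pi>f x') = fst (\<pi>f x)"
  then have "\<pi>f x' \<noteq> \<pi>f x"
    using alone by blast
  with x' have "snd (\<pi>f x) \<noteq> snd (\<pi>f x')"
    by (metis prod_eq_iff)
  with orbit_closure_disjoint_diagonal_if_Z_differs[OF act \<pi>f_cont \<pi>f_equiv x x'(1)]
  show "prod_topology T T closure_of orbit_of (FG r) (\<lambda>g (p, q). (act g p, act g q)) (x, x')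
      \<inter> {(y, y) | y. y \<in> topspace T} = {}"
    by blast
qed

end

theorem lemma5p3:
  fixes r :: nat
    and Gs :: "nat \<Rightarrow> gen list set"
    and \<gamma> :: "nat \<Rightarrow> gen list"
    and T :: "'x topology"
    and act :: "gen list \<Rightarrow> 'x \<Rightarrow> 'x"
    and \<pi>f :: "'x \<Rightarrow> (nat \<Rightarrow> gen) \<times> (nat \<Rightarrow> gen list set)"
  assumes r2: "r \<ge> 2"
    and Gs_normal: "\<And>n. Gs n \<lhd> FG r"
    and Gs_index: "\<And>n. finite (rcosets\<^bsub>FG r\<^esub> Gs n)"
    and Gs_decr: "\<And>n. Gs (Suc n) \<subset> Gs n"
    and Gs_int: "(\<Inter>n. Gs n) = {\<one>\<^bsub>FG r\<^esub>}"
    and \<gamma>_mem: "\<And>n. n \<ge> 2 \<Longrightarrow> \<gamma> n \<in> Gs (n - 1) - Gs n"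
    and T_cpt: "compact_space T"
    and T_metr: "metrizable_space T"
    and act_cont: "continuous_action (FG r) T act"
    and act_min: "minimal_action (FG r) T act"
    and \<pi>f_cont: "continuous_map T (Xtop r Gs) \<pi>f"
    and \<pi>f_surj: "\<pi>f ` topspace T = topspace (Xtop r Gs)"
    and \<pi>f_equiv: "\<And>g x. g \<in> carrier (FG r) \<Longrightarrow> x \<in> topspace T \<Longrightarrow> \<pi>f (act g x) = xact r g (\<pi>f x)"
    and \<pi>f_fibres: "\<And>p. p \<in> topspace (Xtop r Gs) \<Longrightarrow>
        card {x \<in> topspace T. \<pi>f x = p} = (if p \<in> x0_orbit r Gs then 2 else 1)"
    and f_ext: "\<exists>F. continuous_map T euclideanreal F \<and>
        (\<forall>x\<in>topspace T. \<pi>f x \<noteq> x0 r Gs \<longrightarrow> F x = ffun r Gs \<gamma> (\<pi>f x))"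
  shows "point_distal (FG r) T act (\<lambda>x. fst (\<pi>f x))"
proof -
  interpret FG_subgroup_seq r Gs
    using normal.axioms(2)[OF Gs_normal] normal_imp_subgroup[OF Gs_normal]
    by (simp add: FG_subgroup_seq_def FG_subgroup_seq_axioms_def)
  define p where "p = ((\<lambda>_::nat. gen_b), zid r Gs)"
  have "p \<in> topspace (Xtop r Gs)"
    using const_b_in_Ybd[OF r2] zid_in_Zset Gs_decr
    by (simp add: p_def topspace_Xtop psubset_imp_subset)
  moreover have "p \<notin> x0_orbit r Gs"
    using const_b_zid_notin_x0_orbit[OF Gs_int] by (simp add: p_def)
  ultimately have "card {x \<in> topspace T. \<pi>f x = p} = 1"
    using \<pi>f_fibres by simp
  then obtain x where fibre: "{x' \<in> topspace T. \<pi>f x' = p} = {x}"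
    by (rule card_1_singletonE)
  moreover have "\<pi>f x = p"
    using fibre by blast
  ultimately have "{x' \<in> topspace T. \<pi>f x' = \<pi>f x} = {x}"
    by simp
  from point_distal_if_alone_in_fibre[OF act_cont act_min \<pi>f_cont \<pi>f_equiv this]
  show ?thesis .
qed

end
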